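(* Let $x\in J$ and let $\{I_i\}_{i\in F}$ be an $x$-norming family. Then: (1) $\mathrm{supp}(x)\subset\bigcup_{i\in F}I_i$. (2) For every subinterval $G$ of $F$, $\sum_{i\in G}|\sum_{n\in I_i}x(n)|^2=\|x|_{\bigcup_{i\in G}I_i}\|_J^2$. (3) For every $i\in F$ and $n\in I_i\cap\mathrm{supp}(x)$, the numbers $\sum_{m\in I_i}x(m)$, $\sum_{m\in I_i,\,m\le n}x(m)$ and $\sum_{m\in I_i,\,m\ge n}x(m)$ are all nonzero and have the same sign. (4) For every $i\in F$ with $i+1\in F$, $\sum_{m\in I_i}x(m)$ and $\sum_{m\in I_{i+1}}x(m)$ have opposite signs. (5) Let $i\in F$. If $n_1<n_2$ are consecutive elements of $\mathrm{supp}(x)$ with $x(n_1)x(n_2)>0$, then either $\{n_1,n_2\}\subset I_i$ or $\{n_1,n_2\}\cap I_i=\emptyset$.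
   Context: For a real sequence $x=(x(n))_{n\in\mathbb N}$ let $\|x\|_J=\sup\bigl(\sum_{i=1}^n|\sum_{k\in I_i}x(k)|^2\bigr)^{1/2}$ over all $n$ and all families of pairwise disjoint intervals $I_1,\dots,I_n$ of $\mathbb N$ (intervals: nonempty sets of consecutive positive integers, possibly infinite). $J=\{x:\|x\|_J<\infty\}$; for $x\in J$ and any interval $I$ the series $\sum_{k\in I}x(k)$ converges. $\mathrm{supp}(x)=\{n:x(n)\ne0\}$; for $A\subset\mathbb N$, $x|_A$ is the sequence equal to $x$ on $A$ and $0$ off $A$. A family of intervals $\mathcal I=\{I_i\}_{i\in F}$: $F=\{1,\dots,k\}$ or $F=\mathbb N$, each $I_i$ an interval, $\max I_i<\min I_{i+1}$ whenever $i+1\in F$; $\|x\|_{\mathcal I}=(\sum_{i\in F}|\sum_{k\in I_i}x(k)|^2)^{1/2}$; it is $x$-norming if $\|x\|_{\mathcal I}=\|x\|_J$. *)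

theory Defs
  imports "HOL-Analysis.Analysis"
begin

text \<open>Sequences are functions nat => real; only positive indices matter
  (the value at 0 is never used: intervals consist of positive integers and
  the support only contains positive integers).\<close>

definition nat_interval :: "nat set \<Rightarrow> bool" where
  "nat_interval I \<longleftrightarrow> I \<noteq> {} \<and> (\<forall>n\<in>I. 0 < n) \<and>
     (\<forall>a\<in>I. \<forall>c\<in>I. \<forall>b. a \<le> b \<and> b \<le> c \<longrightarrow> b \<in> I)"

definition isum :: "(nat \<Rightarrow> real) \<Rightarrow> nat set \<Rightarrow> real" where
  "isum x I = lim (\<lambda>N. \<Sum>k\<in>I \<inter> {..<N}. x k)"

definition Jvals :: "(nat \<Rightarrow> real) \<Rightarrow> real set" where
  "Jvals x = {(\<Sum>I\<in>\<I>. (isum x I)\<^sup>2) | \<I>. finite \<I> \<and> (\<forall>I\<in>\<I>. nat_interval I)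
               \<and> pairwise disjnt \<I>}"

definition inJ :: "(nat \<Rightarrow> real) \<Rightarrow> bool" where
  "inJ x \<longleftrightarrow> bdd_above (Jvals x)"

definition Jnorm :: "(nat \<Rightarrow> real) \<Rightarrow> real" where
  "Jnorm x = sqrt (Sup (Jvals x))"

definition supp :: "(nat \<Rightarrow> real) \<Rightarrow> nat set" where
  "supp x = {n. 0 < n \<and> x n \<noteq> 0}"

definition restr :: "(nat \<Rightarrow> real) \<Rightarrow> nat set \<Rightarrow> (nat \<Rightarrow> real)" where
  "restr x A = (\<lambda>n. if n \<in> A then x n else 0)"

definition interval_family :: "(nat \<Rightarrow> nat set) \<Rightarrow> nat set \<Rightarrow> bool" where
  "interval_family I F \<longleftrightarrow>
     (F = {1..} \<or> (\<exists>k\<ge>1. F = {1..k})) \<and>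
     (\<forall>i\<in>F. nat_interval (I i)) \<and>
     (\<forall>i. i \<in> F \<and> i + 1 \<in> F \<longrightarrow> (\<forall>a\<in>I i. \<forall>b\<in>I (i + 1). a < b))"

definition fam_norm :: "(nat \<Rightarrow> real) \<Rightarrow> (nat \<Rightarrow> nat set) \<Rightarrow> nat set \<Rightarrow> real" where
  "fam_norm x I F = sqrt (\<Sum>\<^sub>\<infinity>i\<in>F. (isum x (I i))\<^sup>2)"

definition norming :: "(nat \<Rightarrow> real) \<Rightarrow> (nat \<Rightarrow> nat set) \<Rightarrow> nat set \<Rightarrow> bool" where
  "norming x I F \<longleftrightarrow> interval_family I F \<and>
     (\<lambda>i. (isum x (I i))\<^sup>2) summable_on F \<and> fam_norm x I F = Jnorm x"

end

theory Submission
  imports Defs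
begin

(* Everything rests on an exchange principle: replacing the intervals I_i, i in S, of a norming
  family by finitely many disjoint intervals avoiding the remaining I_j cannot increase the sum of
  squares, since together with finitely many of the untouched I_j they form an admissible family
  for ||x||_J^2 = sum_F |sum_{I_i} x|^2.  A support point outside all I_i could be added as a
  singleton, giving (1).  Splitting I_i at a support point n into pieces with sums a, x(n), c gives
  three inequalities a^2 + x(n)^2 + c^2, (a + x(n))^2 + c^2, a^2 + (x(n) + c)^2 <= (a + x(n) + c)^2,
  which force the sign pattern (3).  Merging I_i, I_j and everything in between into a single
  interval, when x vanishes between them, gives (a + b)^2 <= a^2 + b^2, i.e. ab <= 0: this is (4),
  and together with (3) it yields (5).  For (2), an admissible family for x restricted to the union
  of the I_i, i in G, may be intersected with the convex hull of that union, on which x vanishes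
  off the union by (1). *)

section \<open>Sums over intervals\<close>

lemma restr_restr: "restr (restr x A) B = restr x (B \<inter> A)"
  by (auto simp: restr_def)

lemma isum_eq_lim_restr: "isum x A = lim (\<lambda>N. \<Sum>k<N. restr x A k)"
  unfolding isum_def restr_def by (simp add: sum.If_cases Int_commute)

lemma isum_cong: "restr x A = restr y B \<Longrightarrow> isum x A = isum y B"
  by (simp add: isum_eq_lim_restr)

lemma isum_eq_suminf: "summable (restr x A) \<Longrightarrow> isum x A = suminf (restr x A)"
  unfolding isum_eq_lim_restr by (rule limI, rule summable_LIMSEQ)

lemma isum_finite: "finite A \<Longrightarrow> isum x A = sum x A"
proof -
  assume "finite A"
  then have "restr x A sums sum (restr x A) A"
    by (intro sums_finite) (auto simp: restr_def)
  moreover have "sum (restr x A) A = sum x A"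
    by (simp add: restr_def)
  ultimately show ?thesis
    using isum_eq_suminf sums_summable sums_unique by metis
qed

lemma isum_empty [simp]: "isum x {} = 0"
  by (simp add: isum_finite)

lemma isum_singleton [simp]: "isum x {n} = x n"
  by (simp add: isum_finite)

lemma isum_mono_neutral:
  assumes "A \<subseteq> K" "\<And>m. m \<in> K - A \<Longrightarrow> x m = 0"
  shows "isum x K = isum x A"
  using assms by (intro isum_cong) (auto simp: restr_def fun_eq_iff)

lemma nat_interval_atLeastAtMost: "0 < a \<Longrightarrow> a \<le> b \<Longrightarrow> nat_interval {a..b}"
  by (auto simp: nat_interval_def)

lemma nat_interval_convex: "nat_interval K \<Longrightarrow> a \<le> b \<Longrightarrow> b \<le> c \<Longrightarrow> a \<in> K \<Longrightarrow> c \<in> K \<Longrightarrow> b \<in> K"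
  unfolding nat_interval_def by blast

lemma nat_interval_Int:
  assumes "nat_interval K" "\<And>a b c. a \<in> C \<Longrightarrow> c \<in> C \<Longrightarrow> a \<le> b \<Longrightarrow> b \<le> c \<Longrightarrow> b \<in> C"
  shows "K \<inter> C = {} \<or> nat_interval (K \<inter> C)"
  using assms unfolding nat_interval_def by blast

lemma nat_interval_split_at:
  assumes "nat_interval K" "n \<in> K"
  shows "K \<inter> {..<n} = {} \<or> nat_interval (K \<inter> {..<n})" "K \<inter> {n<..} = {} \<or> nat_interval (K \<inter> {n<..})"
    and "nat_interval (K \<inter> {..n})" "nat_interval (K \<inter> {n..})"
  using nat_interval_Int[OF assms(1), of "{..<n}"] nat_interval_Int[OF assms(1), of "{n<..}"]
    nat_interval_Int[OF assms(1), of "{..n}"] nat_interval_Int[OF assms(1), of "{n..}"] assms(2)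
  by auto

definition nat_hull :: "nat set \<Rightarrow> nat set" where
  "nat_hull U = {b. \<exists>a\<in>U. \<exists>c\<in>U. a \<le> b \<and> b \<le> c}"

lemma subset_nat_hull: "U \<subseteq> nat_hull U"
  by (auto simp: nat_hull_def)

lemma nat_hull_mono: "U \<subseteq> V \<Longrightarrow> nat_hull U \<subseteq> nat_hull V"
  by (auto simp: nat_hull_def)

lemma nat_hull_convex: "a \<in> nat_hull U \<Longrightarrow> c \<in> nat_hull U \<Longrightarrow> a \<le> b \<Longrightarrow> b \<le> c \<Longrightarrow> b \<in> nat_hull U"
  unfolding nat_hull_def using order_trans by blast

lemma nat_interval_nat_hull:
  assumes "U \<noteq> {}" "\<And>n. n \<in> U \<Longrightarrow> 0 < n"
  shows "nat_interval (nat_hull U)"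
  unfolding nat_interval_def
proof (intro conjI ballI allI impI)
  show "nat_hull U \<noteq> {}"
    using assms(1) subset_nat_hull by blast
  show "0 < n" if "n \<in> nat_hull U" for n
    using that assms(2) unfolding nat_hull_def by fastforce
  show "b \<in> nat_hull U" if "a \<in> nat_hull U" "c \<in> nat_hull U" "a \<le> b \<and> b \<le> c" for a b c
    using that nat_hull_convex by blast
qed

lemma sum_in_Jvals:
  fixes g :: "'a \<Rightarrow> nat set"
  assumes "finite A" "\<And>a. a \<in> A \<Longrightarrow> g a = {} \<or> nat_interval (g a)" "disjoint_family_on g A"
  shows "(\<Sum>a\<in>A. (isum x (g a))\<^sup>2) \<in> Jvals x"
proof -
  define A' where "A' = {a\<in>A. g a \<noteq> {}}"
  have "inj_on g A'"
    using assms(3) unfolding A'_def disjoint_family_on_def by (auto intro!: inj_onI)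
  have "(\<Sum>a\<in>A. (isum x (g a))\<^sup>2) = (\<Sum>a\<in>A'. (isum x (g a))\<^sup>2)"
    using assms(1) unfolding A'_def by (intro sum.mono_neutral_right) auto
  also have "\<dots> = (\<Sum>K\<in>g ` A'. (isum x K)\<^sup>2)"
    using \<open>inj_on g A'\<close> by (simp add: sum.reindex)
  finally have sum_eq: "(\<Sum>a\<in>A. (isum x (g a))\<^sup>2) = (\<Sum>K\<in>g ` A'. (isum x K)\<^sup>2)" .
  have "disjoint (g ` A')"
    using assms(3) unfolding A'_def
    by (intro disjoint_family_on_disjoint_image) (auto simp: disjoint_family_on_def)
  moreover have "finite (g ` A')" "\<forall>K\<in>g ` A'. nat_interval K"
    using assms(1,2) unfolding A'_def by auto
  ultimately show ?thesis
    unfolding Jvals_def sum_eq by blast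
qed

lemma disjoint_family_on_case_sum:
  assumes "disjoint_family_on f A" "disjoint_family_on g B" "\<And>a b. a \<in> A \<Longrightarrow> b \<in> B \<Longrightarrow> f a \<inter> g b = {}"
  shows "disjoint_family_on (case_sum f g) (A <+> B)"
  unfolding disjoint_family_on_def
proof (intro ballI impI)
  have cross: "g b \<inter> f a = {}" if "a \<in> A" "b \<in> B" for a b
    using assms(3)[OF that] by blast
  fix c c' assume "c \<in> A <+> B" "c' \<in> A <+> B" "c \<noteq> c'"
  then show "case_sum f g c \<inter> case_sum f g c' = {}"
    using assms(1,2) by (elim PlusE) (simp_all add: disjoint_family_on_def assms(3) cross)
qed

lemma many_disjoint_large_intervals:
  fixes e :: real
  assumes "\<And>M. \<exists>B. finite B \<and> nat_interval B \<and> B \<subseteq> {M..} \<and> e \<le> \<bar>sum x B\<bar>"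
  shows "\<exists>\<K>. finite \<K> \<and> card \<K> = k \<and> disjoint \<K> \<and>
           (\<forall>K\<in>\<K>. nat_interval K \<and> K \<subseteq> {M..} \<and> e \<le> \<bar>isum x K\<bar>)"
proof (induction k arbitrary: M)
  case 0
  show ?case by (intro exI[of _ "{}"]) auto
next
  case (Suc k)
  obtain B where B: "finite B" "nat_interval B" "B \<subseteq> {M..}" "e \<le> \<bar>sum x B\<bar>"
    using assms by blast
  obtain \<K> where \<K>: "finite \<K>" "card \<K> = k" "disjoint \<K>"
    "\<forall>K\<in>\<K>. nat_interval K \<and> K \<subseteq> {Suc (Max B)..} \<and> e \<le> \<bar>isum x K\<bar>"
    using Suc.IH by blast
  have "B \<noteq> {}"
    using B(2) by (simp add: nat_interval_def)
  then have "M \<le> Max B"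
    using B(1,3) Max_in by blast
  then have "\<forall>K\<in>insert B \<K>. nat_interval K \<and> K \<subseteq> {M..} \<and> e \<le> \<bar>isum x K\<bar>"
    using B \<K>(4) by (fastforce simp: isum_finite)
  moreover have "disjnt B K" if "K \<in> \<K>" for K
  proof -
    have "K \<subseteq> {Suc (Max B)..}"
      using \<K>(4) that by blast
    then show ?thesis
      using Max_ge[OF B(1)] by (force simp: disjnt_def)
  qed
  moreover from this have "B \<notin> \<K>"
    using \<open>B \<noteq> {}\<close> disjnt_self_iff_empty by blast
  ultimately show ?case
    using \<K>(1-3) by (intro exI[of _ "insert B \<K>"]) (auto simp: pairwise_insert intro: disjnt_sym)
qed

lemma summable_restr_interval:
  assumes "inJ x" "nat_interval I"
  shows "summable (restr x I)"
proof (rule ccontr)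
  assume "\<not> summable (restr x I)"
  then obtain e :: real where e: "0 < e" and large: "\<And>N. \<exists>m\<ge>N. \<exists>n. e \<le> \<bar>sum (restr x I) {m..<n}\<bar>"
    unfolding summable_Cauchy by (auto simp: not_less)
  have "\<exists>B. finite B \<and> nat_interval B \<and> B \<subseteq> {M..} \<and> e \<le> \<bar>sum x B\<bar>" for M
  proof -
    obtain m n where "M \<le> m" "e \<le> \<bar>sum (restr x I) {m..<n}\<bar>"
      using large by blast
    moreover have "sum (restr x I) {m..<n} = sum x (I \<inter> {m..<n})"
      unfolding restr_def by (simp add: sum.If_cases Int_commute)
    moreover have "I \<inter> {m..<n} = {} \<or> nat_interval (I \<inter> {m..<n})"
      using assms(2) by (rule nat_interval_Int) auto
    ultimately show ?thesis
      using e by (intro exI[of _ "I \<inter> {m..<n}"]) auto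
  qed
  note blocks = many_disjoint_large_intervals[OF this]
  obtain bound where bound: "\<And>v. v \<in> Jvals x \<Longrightarrow> v \<le> bound"
    using assms(1) unfolding inJ_def bdd_above_def by blast
  obtain k :: nat where k: "bound / e\<^sup>2 < k"
    using reals_Archimedean2 by blast
  obtain \<K> where \<K>: "finite \<K>" "card \<K> = k" "disjoint \<K>"
    "\<forall>K\<in>\<K>. nat_interval K \<and> e \<le> \<bar>isum x K\<bar>"
    using blocks[of k 0] by blast
  have "e\<^sup>2 \<le> (isum x K)\<^sup>2" if "K \<in> \<K>" for K
    using \<K>(4) that e by (metis abs_le_square_iff abs_of_pos)
  then have "k * e\<^sup>2 \<le> (\<Sum>K\<in>\<K>. (isum x K)\<^sup>2)"
    using sum_bounded_below[of \<K> "e\<^sup>2"] \<K>(2) by simp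
  also have "\<dots> \<le> bound"
    using \<K> by (intro bound) (auto simp: Jvals_def)
  finally show False
    using k e by (simp add: pos_divide_less_eq)
qed

lemma isum_Un_interval:
  assumes J: "inJ x" and P: "P = {} \<or> nat_interval P" and Q: "Q = {} \<or> nat_interval Q"
    and "P \<inter> Q = {}"
  shows "isum x (P \<union> Q) = isum x P + isum x Q"
proof -
  have "summable (restr x K)" if "K = {} \<or> nat_interval K" for K
    using that summable_restr_interval[OF J] by (auto simp: restr_def)
  moreover have "restr x (P \<union> Q) = (\<lambda>k. restr x P k + restr x Q k)"
    using \<open>P \<inter> Q = {}\<close> by (auto simp: restr_def fun_eq_iff)
  ultimately show ?thesis
    using P Q by (simp add: isum_eq_suminf summable_add suminf_add)
qed

section \<open>Families of intervals\<close>

lemma interval_family_index_convex: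
  "interval_family I F \<Longrightarrow> i \<in> F \<Longrightarrow> j \<in> F \<Longrightarrow> i \<le> k \<Longrightarrow> k \<le> j \<Longrightarrow> k \<in> F"
  unfolding interval_family_def by auto

lemma interval_family_pos: "interval_family I F \<Longrightarrow> i \<in> F \<Longrightarrow> 0 < i"
  unfolding interval_family_def by auto

lemma interval_family_nat_interval: "interval_family I F \<Longrightarrow> i \<in> F \<Longrightarrow> nat_interval (I i)"
  unfolding interval_family_def by auto

lemma interval_family_nonempty: "interval_family I F \<Longrightarrow> i \<in> F \<Longrightarrow> I i \<noteq> {}"
  using interval_family_nat_interval nat_interval_def by blast

lemma interval_family_less:
  assumes fam: "interval_family I F" and "i \<in> F" "j \<in> F" "i < j" "a \<in> I i" "b \<in> I j"
  shows "a < b"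
  using assms(3-6)
proof (induction j arbitrary: b)
  case 0
  then show ?case by simp
next
  case (Suc j)
  have "j \<in> F"
    using interval_family_index_convex[OF fam \<open>i \<in> F\<close> \<open>Suc j \<in> F\<close>] \<open>i < Suc j\<close> by simp
  have step: "c < b" if "c \<in> I j" for c
    using fam \<open>j \<in> F\<close> \<open>Suc j \<in> F\<close> \<open>b \<in> I (Suc j)\<close> that unfolding interval_family_def by auto
  show ?case
  proof (cases "i = j")
    case True
    then show ?thesis using step \<open>a \<in> I i\<close> by simp
  next
    case False
    obtain c where "c \<in> I j"
      using interval_family_nonempty[OF fam \<open>j \<in> F\<close>] by blast
    then have "a < c"
      using Suc.IH \<open>j \<in> F\<close> \<open>i < Suc j\<close> \<open>a \<in> I i\<close> False by simp
    then show ?thesis using step[OF \<open>c \<in> I j\<close>] by simp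
  qed
qed

lemma interval_family_disjoint: "interval_family I F \<Longrightarrow> disjoint_family_on I F"
  unfolding disjoint_family_on_def
proof (intro ballI impI)
  fix i j assume "interval_family I F" "i \<in> F" "j \<in> F" "i \<noteq> j"
  then have "a \<noteq> b" if "a \<in> I i" "b \<in> I j" for a b
    using interval_family_less[of I F i j a b] interval_family_less[of I F j i b a] that
    by (cases "i < j") auto
  then show "I i \<inter> I j = {}" by blast
qed

lemma interval_family_disjoint_nat_hull:
  assumes fam: "interval_family I F" and G: "nat_interval G" "G \<subseteq> F" and j: "j \<in> F - G"
  shows "I j \<inter> nat_hull (\<Union>i\<in>G. I i) = {}"
proof -
  have "b \<notin> nat_hull (\<Union>i\<in>G. I i)" if "b \<in> I j" for b
  proof
    assume "b \<in> nat_hull (\<Union>i\<in>G. I i)"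
    then obtain u w g g' where uw: "g \<in> G" "u \<in> I g" "g' \<in> G" "w \<in> I g'" "u \<le> b" "b \<le> w"
      unfolding nat_hull_def by blast
    have "j < g \<or> g' < j"
    proof (rule ccontr)
      assume "\<not> (j < g \<or> g' < j)"
      then have "j \<in> G"
        using G(1) uw(1,3) unfolding nat_interval_def by (meson not_le)
      then show False using j by simp
    qed
    then show False
    proof
      assume "j < g"
      then have "b < u"
        using interval_family_less[OF fam _ _ _ that uw(2)] j uw(1) G(2) by blast
      then show False using uw(5) by simp
    next
      assume "g' < j"
      then have "w < b"
        using interval_family_less[OF fam _ _ _ uw(4) that] j uw(3) G(2) by blast
      then show False using uw(6) by simp
    qed
  qed
  then show ?thesis by blast
qed

section \<open>Norming families\<close>

lemma norming_interval_family: "norming x I F \<Longrightarrow> interval_family I F"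
  by (simp add: norming_def)

lemma norming_infsum_eq_Sup: "norming x I F \<Longrightarrow> (\<Sum>\<^sub>\<infinity>i\<in>F. (isum x (I i))\<^sup>2) = Sup (Jvals x)"
  unfolding norming_def fam_norm_def Jnorm_def by simp

lemma norming_exchange:
  fixes g :: "'a \<Rightarrow> nat set"
  assumes J: "inJ x" and N: "norming x I F" and S: "S \<subseteq> F" and A: "finite A"
    and g: "\<And>a. a \<in> A \<Longrightarrow> g a = {} \<or> nat_interval (g a)" "disjoint_family_on g A"
    and outside: "\<And>a j. a \<in> A \<Longrightarrow> j \<in> F - S \<Longrightarrow> disjnt (g a) (I j)"
  shows "(\<Sum>a\<in>A. (isum x (g a))\<^sup>2) \<le> (\<Sum>\<^sub>\<infinity>i\<in>S. (isum x (I i))\<^sup>2)"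
proof -
  define f where "f = (\<lambda>i. (isum x (I i))\<^sup>2)"
  note fam = norming_interval_family[OF N]
  have "f summable_on F"
    using N by (simp add: norming_def f_def)
  then have sS: "f summable_on S" and sR: "f summable_on F - S"
    using S summable_on_subset_banach by blast+
  have split: "infsum f F = infsum f S + infsum f (F - S)"
    using infsum_Un_disjoint[OF sS sR] S by (simp add: Un_absorb1)
  have "infsum f (F - S) \<le> Sup (Jvals x) - (\<Sum>a\<in>A. (isum x (g a))\<^sup>2)"
  proof (rule infsum_le_finite_sums[OF sR])
    fix D assume D: "finite D" "D \<subseteq> F - S"
    define h where "h = case_sum g I"
    have "(\<Sum>a\<in>A. (isum x (g a))\<^sup>2) + sum f D = (\<Sum>c\<in>A <+> D. (isum x (h c))\<^sup>2)"
      using A D(1) by (simp add: sum.Plus h_def f_def comp_def)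
    also have "\<dots> \<le> Sup (Jvals x)"
    proof (rule cSup_upper)
      have "disjoint_family_on I D"
        using D(2) interval_family_disjoint[OF fam] by (blast intro: disjoint_family_on_mono)
      then have "disjoint_family_on h (A <+> D)"
        using g(2) outside D(2) unfolding h_def by (intro disjoint_family_on_case_sum) (auto simp: disjnt_def)
      moreover have "h c = {} \<or> nat_interval (h c)" if "c \<in> A <+> D" for c
        using that interval_family_nat_interval[OF fam] D(2)
        by (elim PlusE) (auto simp: h_def dest: g(1))
      ultimately show "(\<Sum>c\<in>A <+> D. (isum x (h c))\<^sup>2) \<in> Jvals x"
        using A D(1) by (intro sum_in_Jvals) auto
      show "bdd_above (Jvals x)"
        using J by (simp add: inJ_def)
    qed
    finally show "sum f D \<le> Sup (Jvals x) - (\<Sum>a\<in>A. (isum x (g a))\<^sup>2)"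
      by simp
  qed
  then show ?thesis
    using split norming_infsum_eq_Sup[OF N] unfolding f_def by simp
qed

lemma norming_exchange_single:
  assumes "inJ x" "norming x I F" "S \<subseteq> F" "nat_interval K"
    and "\<And>j. j \<in> F - S \<Longrightarrow> disjnt K (I j)"
  shows "(isum x K)\<^sup>2 \<le> (\<Sum>\<^sub>\<infinity>i\<in>S. (isum x (I i))\<^sup>2)"
  using norming_exchange[OF assms(1-3), of "{()}" "\<lambda>_. K"] assms(4,5)
  by (simp add: disjoint_family_on_def)

lemma norming_supp_subset:
  assumes J: "inJ x" and N: "norming x I F"
  shows "supp x \<subseteq> (\<Union>i\<in>F. I i)"
proof
  fix n assume n: "n \<in> supp x"
  show "n \<in> (\<Union>i\<in>F. I i)"
  proof (rule ccontr)
    assume "n \<notin> (\<Union>i\<in>F. I i)"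
    then have "(isum x {n})\<^sup>2 \<le> (\<Sum>\<^sub>\<infinity>i\<in>{}. (isum x (I i))\<^sup>2)"
      using n by (intro norming_exchange_single[OF J N]) (auto simp: nat_interval_def supp_def disjnt_def)
    then show False
      using n by (simp add: supp_def)
  qed
qed

lemma norming_vanishes_on_nat_hull:
  assumes J: "inJ x" and N: "norming x I F" and G: "nat_interval G" "G \<subseteq> F"
    and a: "a \<in> nat_hull (\<Union>i\<in>G. I i)" "a \<notin> (\<Union>i\<in>G. I i)"
  shows "x a = 0"
proof (rule ccontr)
  assume "x a \<noteq> 0"
  note fam = norming_interval_family[OF N]
  obtain g u where "g \<in> G" "u \<in> I g" "u \<le> a"
    using a(1) unfolding nat_hull_def by blast
  then have "0 < a"
    using interval_family_nat_interval[OF fam] G(2) unfolding nat_interval_def by fastforce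
  with \<open>x a \<noteq> 0\<close> obtain j where "j \<in> F" "a \<in> I j"
    using norming_supp_subset[OF J N] by (auto simp: supp_def)
  moreover from this have "j \<notin> G"
    using a(2) by blast
  ultimately show False
    using interval_family_disjoint_nat_hull[OF fam G] a(1) by blast
qed

lemma norming_split_le:
  assumes J: "inJ x" and N: "norming x I F" and i: "i \<in> F"
    and sorted: "sorted_wrt (\<lambda>K L. \<forall>a\<in>K. \<forall>b\<in>L. a < b) Ks"
    and pieces: "\<forall>K\<in>set Ks. K \<subseteq> I i \<and> (K = {} \<or> nat_interval K)"
  shows "(\<Sum>K\<leftarrow>Ks. (isum x K)\<^sup>2) \<le> (isum x (I i))\<^sup>2"
proof -
  note fam = norming_interval_family[OF N]
  have "(\<Sum>k<length Ks. (isum x (Ks ! k))\<^sup>2) \<le> (\<Sum>\<^sub>\<infinity>j\<in>{i}. (isum x (I j))\<^sup>2)"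
  proof (rule norming_exchange[OF J N])
    show "disjoint_family_on ((!) Ks) {..<length Ks}"
      unfolding disjoint_family_on_def
    proof (intro ballI impI)
      fix k l assume "k \<in> {..<length Ks}" "l \<in> {..<length Ks}" "k \<noteq> l"
      then show "Ks ! k \<inter> Ks ! l = {}"
        using sorted_wrt_nth_less[OF sorted, of k l] sorted_wrt_nth_less[OF sorted, of l k]
        by (cases "k < l") fastforce+
    qed
    show "disjnt (Ks ! k) (I j)" if "k \<in> {..<length Ks}" "j \<in> F - {i}" for k j
    proof -
      have "Ks ! k \<subseteq> I i"
        using pieces that(1) by simp
      moreover have "I i \<inter> I j = {}"
        using interval_family_disjoint[OF fam] i that(2) by (auto dest: disjoint_family_onD)
      ultimately show ?thesis
        by (auto simp: disjnt_def)
    qed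
  qed (use i pieces in auto)
  then show ?thesis
    by (simp add: sum_list_sum_nth atLeast0LessThan)
qed

lemma sgn_eq_if_sq_splits_le:
  fixes a b c :: real
  assumes "b \<noteq> 0" and "a\<^sup>2 + b\<^sup>2 + c\<^sup>2 \<le> (a + b + c)\<^sup>2"
    and "(a + b)\<^sup>2 + c\<^sup>2 \<le> (a + b + c)\<^sup>2" and "a\<^sup>2 + (b + c)\<^sup>2 \<le> (a + b + c)\<^sup>2"
  shows "a + b + c \<noteq> 0 \<and> a + b \<noteq> 0 \<and> b + c \<noteq> 0 \<and>
    sgn (a + b) = sgn (a + b + c) \<and> sgn (b + c) = sgn (a + b + c)"
proof -
  have three: "0 \<le> a * b + b * c + c * a" and left: "0 \<le> (a + b) * c" and right: "0 \<le> a * (b + c)"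
    using assms(2-4) by (simp_all add: power2_eq_square algebra_simps)
  have "b * b > 0"
    using \<open>b \<noteq> 0\<close> not_real_square_gt_zero by blast
  have ab: "a + b \<noteq> 0"
  proof
    assume "a + b = 0"
    then have "a * b + b * c + c * a = - (b * b)"
      by (simp add: eq_neg_iff_add_eq_0[symmetric] algebra_simps)
    then show False using three \<open>b * b > 0\<close> by linarith
  qed
  have bc: "b + c \<noteq> 0"
  proof
    assume "b + c = 0"
    then have "a * b + b * c + c * a = - (b * b)"
      by (simp add: add_eq_0_iff2 algebra_simps)
    then show False using three \<open>b * b > 0\<close> by linarith
  qed
  have same_sgn: "sgn p = sgn q" if "0 < p * q" for p q :: real
    using that by (auto simp: zero_less_mult_iff)
  have "(a + b) * (a + b + c) = (a + b) * (a + b) + (a + b) * c"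
    by (simp add: algebra_simps)
  then have "0 < (a + b) * (a + b + c)"
    using ab left not_real_square_gt_zero[of "a + b"] by linarith
  moreover have "(b + c) * (a + b + c) = (b + c) * (b + c) + a * (b + c)"
    by (simp add: algebra_simps)
  then have "0 < (b + c) * (a + b + c)"
    using bc right not_real_square_gt_zero[of "b + c"] by linarith
  ultimately show ?thesis
    using ab bc same_sgn by (metis sgn_0_0 sgn_zero_iff)
qed

lemma norming_sgn_partial_sums:
  assumes J: "inJ x" and N: "norming x I F" and i: "i \<in> F" and n: "n \<in> I i" "n \<in> supp x"
  shows "isum x (I i) \<noteq> 0 \<and> isum x {m\<in>I i. m \<le> n} \<noteq> 0 \<and> isum x {m\<in>I i. n \<le> m} \<noteq> 0 \<and>
    sgn (isum x {m\<in>I i. m \<le> n}) = sgn (isum x (I i)) \<and>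
    sgn (isum x {m\<in>I i. n \<le> m}) = sgn (isum x (I i))"
proof -
  have Ii: "nat_interval (I i)"
    using interval_family_nat_interval N i norming_def by blast
  define A where "A = I i \<inter> {..<n}"
  define B where "B = I i \<inter> {n<..}"
  have L: "{m\<in>I i. m \<le> n} = A \<union> {n}" and R: "{m\<in>I i. n \<le> m} = {n} \<union> B"
    and T: "I i = (A \<union> {n}) \<union> B"
    using n(1) by (auto simp: A_def B_def)
  have "I i \<inter> {..n} = A \<union> {n}" "I i \<inter> {n..} = {n} \<union> B"
    using n(1) by (auto simp: A_def B_def)
  then have A: "A = {} \<or> nat_interval A" and B: "B = {} \<or> nat_interval B"
    and An: "nat_interval (A \<union> {n})" and nB: "nat_interval ({n} \<union> B)"
    using nat_interval_split_at[OF Ii n(1)] by (simp_all add: A_def[symmetric] B_def[symmetric])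
  have single: "nat_interval {n}"
    using Ii n(1) by (auto simp: nat_interval_def)
  have disj: "A \<inter> {n} = {}" "{n} \<inter> B = {}" "(A \<union> {n}) \<inter> B = {}"
    by (auto simp: A_def B_def)
  have iL: "isum x (A \<union> {n}) = isum x A + x n"
    using isum_Un_interval[OF J A _ disj(1)] single by simp
  have iR: "isum x ({n} \<union> B) = x n + isum x B"
    using isum_Un_interval[OF J _ B disj(2)] single by simp
  have iT: "isum x (I i) = isum x A + x n + isum x B"
    using isum_Un_interval[OF J _ B disj(3)] An iL T by simp
  let ?ordered = "sorted_wrt (\<lambda>K L. \<forall>a\<in>K. \<forall>b\<in>L. a < b)"
  have ordered: "?ordered [A, {n}, B]" "?ordered [A \<union> {n}, B]" "?ordered [A, {n} \<union> B]"
    by (auto simp: A_def B_def)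
  have sub: "A \<subseteq> I i" "B \<subseteq> I i" "n \<in> I i"
    using n(1) by (auto simp: A_def B_def)
  have "(isum x A)\<^sup>2 + (x n)\<^sup>2 + (isum x B)\<^sup>2 \<le> (isum x (I i))\<^sup>2"
    using norming_split_le[OF J N i ordered(1)] sub A B single by (simp add: add.assoc)
  moreover have "(isum x A + x n)\<^sup>2 + (isum x B)\<^sup>2 \<le> (isum x (I i))\<^sup>2"
    using norming_split_le[OF J N i ordered(2)] sub B An iL by simp
  moreover have "(isum x A)\<^sup>2 + (x n + isum x B)\<^sup>2 \<le> (isum x (I i))\<^sup>2"
    using norming_split_le[OF J N i ordered(3)] sub A nB iR by simp
  moreover have "x n \<noteq> 0"
    using n(2) by (simp add: supp_def)
  ultimately show ?thesis
    using sgn_eq_if_sq_splits_le[where a = "isum x A" and b = "x n" and c = "isum x B"] L R iL iR iT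
    by (simp add: add.assoc)
qed

lemma interval_family_nat_hull_Un_between:
  assumes fam: "interval_family I F" and ij: "i \<in> F" "j \<in> F" "i < j"
    and a: "a \<in> nat_hull (I i \<union> I j)" "a \<notin> I i \<union> I j"
  shows "(\<forall>u\<in>I i. u < a) \<and> (\<forall>v\<in>I j. a < v)"
proof -
  note less = interval_family_less[OF fam ij]
  have Ii: "nat_interval (I i)" and Ij: "nat_interval (I j)"
    using interval_family_nat_interval[OF fam] ij by auto
  obtain p q where pq: "p \<in> I i \<union> I j" "q \<in> I i \<union> I j" "p \<le> a" "a \<le> q"
    using a(1) unfolding nat_hull_def by blast
  have "u < a" if "u \<in> I i" for u
    using pq(1,3) a(2) nat_interval_convex[OF Ii, of p a u] less[of u p] that by (cases "u < a") auto
  moreover have "a < v" if "v \<in> I j" for v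
    using pq(2,4) a(2) nat_interval_convex[OF Ij, of v a q] less[of q v] that by (cases "a < v") auto
  ultimately show ?thesis
    by blast
qed

lemma norming_merge_le:
  assumes J: "inJ x" and N: "norming x I F" and ij: "i \<in> F" "j \<in> F" "i < j"
  shows "(isum x (nat_hull (I i \<union> I j)))\<^sup>2 \<le> (\<Sum>\<^sub>\<infinity>k\<in>{i..j}. (isum x (I k))\<^sup>2)"
proof (rule norming_exchange_single[OF J N])
  note fam = norming_interval_family[OF N]
  show G: "{i..j} \<subseteq> F"
    using interval_family_index_convex[OF fam ij(1,2)] by auto
  show "nat_interval (nat_hull (I i \<union> I j))"
    using interval_family_nat_interval[OF fam] ij by (intro nat_interval_nat_hull) (auto simp: nat_interval_def)
  have "nat_hull (I i \<union> I j) \<subseteq> nat_hull (\<Union>k\<in>{i..j}. I k)"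
    using ij(3) by (intro nat_hull_mono) force
  moreover have "nat_interval {i..j}"
    using interval_family_pos[OF fam ij(1)] ij(3) by (simp add: nat_interval_atLeastAtMost)
  ultimately show "disjnt (nat_hull (I i \<union> I j)) (I k)" if "k \<in> F - {i..j}" for k
    using interval_family_disjoint_nat_hull[OF fam _ G that] by (auto simp: disjnt_def)
qed

lemma norming_opposite_signs:
  assumes J: "inJ x" and N: "norming x I F" and ij: "i \<in> F" "j \<in> F" "i < j"
    and between: "\<And>a. \<forall>u\<in>I i. u < a \<Longrightarrow> \<forall>v\<in>I j. a < v \<Longrightarrow> x a = 0"
  shows "isum x (I i) * isum x (I j) \<le> 0"
proof -
  note fam = norming_interval_family[OF N]
  have "I i \<inter> I j = {}"
    using interval_family_disjoint[OF fam] ij by (auto dest: disjoint_family_onD)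
  have "isum x (nat_hull (I i \<union> I j)) = isum x (I i \<union> I j)"
    using subset_nat_hull between interval_family_nat_hull_Un_between[OF fam ij]
    by (intro isum_mono_neutral) auto
  also have "\<dots> = isum x (I i) + isum x (I j)"
    using isum_Un_interval[OF J _ _ \<open>I i \<inter> I j = {}\<close>] interval_family_nat_interval[OF fam] ij
    by simp
  finally have merged: "isum x (nat_hull (I i \<union> I j)) = isum x (I i) + isum x (I j)" .
  have "isum x (I k) = 0" if "i < k" "k < j" for k
  proof -
    have "k \<in> F"
      using interval_family_index_convex[OF fam ij(1,2)] that by simp
    have "x b = 0" if "b \<in> I k" for b
      using between interval_family_less[OF fam] ij \<open>k \<in> F\<close> \<open>i < k\<close> \<open>k < j\<close> that by metis
    then show ?thesis
      using isum_mono_neutral[of "{}" "I k"] by simp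
  qed
  then have "(\<Sum>k\<in>{i..j}. (isum x (I k))\<^sup>2) = (\<Sum>k\<in>{i, j}. (isum x (I k))\<^sup>2)"
    using ij(3) by (intro sum.mono_neutral_right) auto
  then have "(\<Sum>\<^sub>\<infinity>k\<in>{i..j}. (isum x (I k))\<^sup>2) = (isum x (I i))\<^sup>2 + (isum x (I j))\<^sup>2"
    using ij(3) by simp
  then show ?thesis
    using norming_merge_le[OF J N ij] merged by (simp add: power2_sum)
qed

lemma norming_adjacent_opposite_signs:
  assumes J: "inJ x" and N: "norming x I F" and i: "i \<in> F" "i + 1 \<in> F"
  shows "isum x (I i) * isum x (I (i + 1)) \<le> 0"
proof (rule norming_opposite_signs[OF J N i])
  note fam = norming_interval_family[OF N]
  fix a assume left: "\<forall>u\<in>I i. u < a" and right: "\<forall>v\<in>I (i + 1). a < v"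
  have G: "nat_interval {i..i + 1}" "{i..i + 1} \<subseteq> F"
    using i interval_family_pos[OF fam] by (auto intro: nat_interval_atLeastAtMost simp: le_Suc_eq)
  have "{i..i + 1} = {i, i + 1}"
    by auto
  then have union: "(\<Union>k\<in>{i..i + 1}. I k) = I i \<union> I (i + 1)"
    by simp
  obtain u v where "u \<in> I i" "v \<in> I (i + 1)"
    using interval_family_nonempty[OF fam] i by blast
  then have "a \<in> nat_hull (\<Union>k\<in>{i..i + 1}. I k)"
    using left right unfolding union nat_hull_def by (blast intro: less_imp_le)
  moreover have "a \<notin> (\<Union>k\<in>{i..i + 1}. I k)"
    using left right unfolding union by blast
  ultimately show "x a = 0"
    by (rule norming_vanishes_on_nat_hull[OF J N G])
qed simp

lemma norming_consecutive_same_sign: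
  assumes J: "inJ x" and N: "norming x I F" and pq: "p \<in> F" "q \<in> F"
    and n: "n1 \<in> I p" "n2 \<in> I q" "n1 \<in> supp x" "n2 \<in> supp x" "n1 < n2"
    and gap: "\<forall>m. n1 < m \<and> m < n2 \<longrightarrow> m \<notin> supp x" and pos: "0 < x n1 * x n2"
  shows "p = q"
proof (rule ccontr)
  assume "p \<noteq> q"
  note fam = norming_interval_family[OF N]
  note less = interval_family_less[OF fam]
  have "p < q"
  proof (rule ccontr)
    assume "\<not> p < q"
    then have "n2 < n1"
      using \<open>p \<noteq> q\<close> less[OF pq(2,1) _ n(2,1)] by simp
    then show False
      using n(5) by simp
  qed
  have vanish: "x m = 0" if "n1 < m" "m < n2" for m
    using gap that by (auto simp: supp_def)
  have "isum x {m\<in>I p. n1 \<le> m} = isum x {n1}"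
    using n(1) less[OF pq \<open>p < q\<close> _ n(2)] vanish by (intro isum_mono_neutral) auto
  then have sgn_p: "sgn (x n1) = sgn (isum x (I p))"
    using norming_sgn_partial_sums[OF J N pq(1) n(1,3)] by simp
  have "isum x {m\<in>I q. m \<le> n2} = isum x {n2}"
    using n(2) less[OF pq \<open>p < q\<close> n(1)] vanish by (intro isum_mono_neutral) auto
  then have sgn_q: "sgn (x n2) = sgn (isum x (I q))"
    using norming_sgn_partial_sums[OF J N pq(2) n(2,4)] by simp
  have "sgn (isum x (I p) * isum x (I q)) = sgn (x n1 * x n2)"
    by (simp add: sgn_mult sgn_p sgn_q)
  also have "\<dots> = 1"
    using pos by simp
  finally have "0 < isum x (I p) * isum x (I q)"
    by (simp add: sgn_1_pos)
  moreover have "isum x (I p) * isum x (I q) \<le> 0"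
    using n(1,2) vanish by (intro norming_opposite_signs[OF J N pq \<open>p < q\<close>]) auto
  ultimately show False
    by simp
qed

lemma norming_isum_restr_UN:
  assumes J: "inJ x" and N: "norming x I F" and G: "nat_interval G" "G \<subseteq> F"
  shows "isum (restr x (\<Union>i\<in>G. I i)) K = isum x (K \<inter> nat_hull (\<Union>i\<in>G. I i))"
proof -
  have "isum (restr x (\<Union>i\<in>G. I i)) K = isum x (K \<inter> (\<Union>i\<in>G. I i))"
    by (rule isum_cong) (simp add: restr_restr)
  also have "\<dots> = isum x (K \<inter> nat_hull (\<Union>i\<in>G. I i))"
    using subset_nat_hull[of "\<Union>i\<in>G. I i"] norming_vanishes_on_nat_hull[OF J N G]
    by (intro isum_mono_neutral[symmetric]) auto
  finally show ?thesis .
qed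

lemma norming_Jvals_restr_le:
  assumes J: "inJ x" and N: "norming x I F" and G: "nat_interval G" "G \<subseteq> F"
    and v: "v \<in> Jvals (restr x (\<Union>i\<in>G. I i))"
  shows "v \<le> (\<Sum>\<^sub>\<infinity>i\<in>G. (isum x (I i))\<^sup>2)"
proof -
  note fam = norming_interval_family[OF N]
  define H where "H = nat_hull (\<Union>i\<in>G. I i)"
  obtain \<K> where \<K>: "v = (\<Sum>K\<in>\<K>. (isum (restr x (\<Union>i\<in>G. I i)) K)\<^sup>2)" "finite \<K>"
    "\<forall>K\<in>\<K>. nat_interval K" "disjoint \<K>"
    using v unfolding Jvals_def by blast
  have "(\<Sum>K\<in>\<K>. (isum x (K \<inter> H))\<^sup>2) \<le> (\<Sum>\<^sub>\<infinity>i\<in>G. (isum x (I i))\<^sup>2)"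
  proof (rule norming_exchange[OF J N G(2) \<K>(2)])
    show "K \<inter> H = {} \<or> nat_interval (K \<inter> H)" if "K \<in> \<K>" for K
      using \<K>(3) that nat_hull_convex unfolding H_def by (intro nat_interval_Int) blast+
    show "disjoint_family_on (\<lambda>K. K \<inter> H) \<K>"
      using \<K>(4) by (auto simp: disjoint_family_on_def pairwise_def disjnt_def)
    show "disjnt (K \<inter> H) (I j)" if "j \<in> F - G" for K j
      using interval_family_disjoint_nat_hull[OF fam G that] unfolding H_def
      by (auto simp: disjnt_def)
  qed
  then show ?thesis
    using \<K>(1) norming_isum_restr_UN[OF J N G] unfolding H_def by simp
qed

lemma norming_restr_Jnorm:
  assumes J: "inJ x" and N: "norming x I F" and G: "nat_interval G" "G \<subseteq> F"
  shows "(\<Sum>\<^sub>\<infinity>i\<in>G. (isum x (I i))\<^sup>2) = (Jnorm (restr x (\<Union>i\<in>G. I i)))\<^sup>2"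
proof -
  note fam = norming_interval_family[OF N]
  define f where "f = (\<lambda>i. (isum x (I i))\<^sup>2)"
  define y where "y = restr x (\<Union>i\<in>G. I i)"
  have upper: "v \<le> infsum f G" if "v \<in> Jvals y" for v
    using norming_Jvals_restr_le[OF J N G] that unfolding f_def y_def by blast
  then have bdd: "bdd_above (Jvals y)"
    by (auto simp: bdd_above_def)
  have "Sup (Jvals y) = infsum f G"
  proof (rule antisym)
    have "(\<Sum>a\<in>{}. (isum y (I a))\<^sup>2) \<in> Jvals y"
      by (rule sum_in_Jvals) (auto simp: disjoint_family_on_def)
    then show "Sup (Jvals y) \<le> infsum f G"
      using upper by (intro cSup_least) auto
    have "f summable_on G"
      using N G(2) summable_on_subset_banach unfolding norming_def f_def by blast
    then show "infsum f G \<le> Sup (Jvals y)"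
    proof (rule infsum_le_finite_sums)
      fix D assume D: "finite D" "D \<subseteq> G"
      have "isum y (I i) = isum x (I i)" if "i \<in> D" for i
        using norming_isum_restr_UN[OF J N G, of "I i"] subset_nat_hull D(2) that
        unfolding y_def by (metis Int_absorb2 UN_upper order_trans subsetD)
      then have "sum f D = (\<Sum>i\<in>D. (isum y (I i))\<^sup>2)"
        unfolding f_def by simp
      also have "\<dots> \<in> Jvals y"
        using D G(2) interval_family_nat_interval[OF fam]
          disjoint_family_on_mono[OF _ interval_family_disjoint[OF fam]]
        by (intro sum_in_Jvals) auto
      finally show "sum f D \<le> Sup (Jvals y)"
        using bdd by (rule cSup_upper)
    qed
  qed
  moreover have "0 \<le> infsum f G"
    unfolding f_def by (rule infsum_nonneg) simp
  ultimately show ?thesis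
    unfolding Jnorm_def y_def[symmetric] f_def[symmetric] by simp
qed

theorem proposition3p5:
  fixes x :: "nat \<Rightarrow> real" and I :: "nat \<Rightarrow> nat set" and F :: "nat set"
  assumes "inJ x" and "norming x I F"
  shows "supp x \<subseteq> (\<Union>i\<in>F. I i)
    \<and> (\<forall>G. nat_interval G \<and> G \<subseteq> F \<longrightarrow>
           (\<Sum>\<^sub>\<infinity>i\<in>G. (isum x (I i))\<^sup>2) = (Jnorm (restr x (\<Union>i\<in>G. I i)))\<^sup>2)
    \<and> (\<forall>i\<in>F. \<forall>n\<in>I i \<inter> supp x.
           isum x (I i) \<noteq> 0 \<and> isum x {m\<in>I i. m \<le> n} \<noteq> 0 \<and> isum x {m\<in>I i. n \<le> m} \<noteq> 0 \<and>
           sgn (isum x {m\<in>I i. m \<le> n}) = sgn (isum x (I i)) \<and>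
           sgn (isum x {m\<in>I i. n \<le> m}) = sgn (isum x (I i)))
    \<and> (\<forall>i. i \<in> F \<and> i + 1 \<in> F \<longrightarrow> isum x (I i) * isum x (I (i + 1)) \<le> 0)
    \<and> (\<forall>i\<in>F. \<forall>n1 n2. n1 \<in> supp x \<and> n2 \<in> supp x \<and> n1 < n2 \<and>
           (\<forall>m. n1 < m \<and> m < n2 \<longrightarrow> m \<notin> supp x) \<and> x n1 * x n2 > 0 \<longrightarrow>
           {n1, n2} \<subseteq> I i \<or> {n1, n2} \<inter> I i = {})"
proof -
  note fam = norming_interval_family[OF assms(2)]
  have supp: "supp x \<subseteq> (\<Union>i\<in>F. I i)"
    using norming_supp_subset[OF assms] .
  have "{n1, n2} \<subseteq> I i \<or> {n1, n2} \<inter> I i = {}"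
    if "i \<in> F" and n: "n1 \<in> supp x" "n2 \<in> supp x" "n1 < n2"
      "\<forall>m. n1 < m \<and> m < n2 \<longrightarrow> m \<notin> supp x" "x n1 * x n2 > 0" for i n1 n2
  proof -
    obtain p q where pq: "p \<in> F" "n1 \<in> I p" "q \<in> F" "n2 \<in> I q"
      using supp n(1,2) by blast
    have "p = q"
      by (rule norming_consecutive_same_sign[OF assms pq(1,3,2,4) n])
    then show ?thesis
      using pq interval_family_disjoint[OF fam] \<open>i \<in> F\<close>
      by (cases "i = p") (auto dest: disjoint_family_onD)
  qed
  then show ?thesis
    using supp norming_restr_Jnorm[OF assms] norming_sgn_partial_sums[OF assms]
      norming_adjacent_opposite_signs[OF assms]
    by (intro conjI allI ballI impI) (simp_all, blast)
qed

end
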